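(* Let $P^{(1)},\dots,P^{(m)}\in\{I,X,Y,Z\}^n$ be phase-free Pauli strings. Consider the certification procedure: maintain a dictionary $D$ from labeled patterns $(A,a)$ (with $A\subseteq\{1,\dots,n\}$, $a:A\to\{X,Y,Z\}$) to integers, initially zero, and a counter $N=0$. For $i=1,\dots,m$: with $P=P^{(i)}$ compute $c=(N-Z)/2$ where $Z=\sum_{A\subseteq\operatorname{supp}(P)}(-2)^{|A|}\sum_{a\in\mathcal{L}_P(A)}D[(A,a)]$ and $\mathcal{L}_P(A)=\{a:A\to\{X,Y,Z\}: a(j)\neq P_j\ \forall j\in A\}$; if $c>0$, scan $j=1,\dots,i-1$, testing whether $|\operatorname{conf}(P^{(j)},P^{(i)})|$ is odd, and return the first pair $(j,i)$ for which it is; otherwise increment $D[(A,P^{(i)}|_A)]$ by one for every $A\subseteq\operatorname{supp}(P^{(i)})$ and set $N\leftarrow N+1$. If the loop finishes, return ``all commute''. Then this procedure returns ``all commute'' if and only if all the input strings pairwise commute, and if it returns a pair $(j,i)$, then $P^{(j)}P^{(i)}=-P^{(i)}P^{(j)}$.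
   Context: A phase-free $n$-qubit Pauli string is a word $P=(P_1,\dots,P_n)\in\{I,X,Y,Z\}^n$ with $I,X,Y,Z$ the identity and the three Pauli matrices, identified with $P_1\otimes\cdots\otimes P_n$. Its support is $\operatorname{supp}(P)=\{j: P_j\neq I\}$. The conflict set of $P,Q$ is $\operatorname{conf}(P,Q)=\{j: P_j\neq I,\ Q_j\neq I,\ P_j\neq Q_j\}$; two Pauli strings anticommute exactly when their conflict set has odd size and commute otherwise. *)

theory Defs
  imports Complex_Main
begin

datatype pauli = PI | PX | PY | PZ

(* A phase-free Pauli string is a list of single-qubit Paulis; position j (0-based)
   corresponds to qubit j+1 of the paper. *)
type_synonym pstring = "pauli list"

definition supp :: "pstring \<Rightarrow> nat set" where
  "supp P = {j. j < length P \<and> P ! j \<noteq> PI}"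

definition conf :: "pstring \<Rightarrow> pstring \<Rightarrow> nat set" where
  "conf P Q = {j. j < length P \<and> j < length Q \<and> P ! j \<noteq> PI \<and> Q ! j \<noteq> PI \<and> P ! j \<noteq> Q ! j}"

(* Action of the operators on a state vector of C^(2^n), given as its coefficient
   function on computational basis states x :: nat \<Rightarrow> bool (bit j = qubit j). *)
fun act1 :: "pauli \<Rightarrow> nat \<Rightarrow> ((nat \<Rightarrow> bool) \<Rightarrow> complex) \<Rightarrow> ((nat \<Rightarrow> bool) \<Rightarrow> complex)" where
  "act1 PI j f = f"
| "act1 PX j f = (\<lambda>x. f (x(j := \<not> x j)))"
| "act1 PY j f = (\<lambda>x. (if x j then \<i> else - \<i>) * f (x(j := \<not> x j)))"
| "act1 PZ j f = (\<lambda>x. (if x j then -1 else 1) * f x)"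

definition act :: "pstring \<Rightarrow> ((nat \<Rightarrow> bool) \<Rightarrow> complex) \<Rightarrow> ((nat \<Rightarrow> bool) \<Rightarrow> complex)" where
  "act P = fold (\<lambda>j g. act1 (P ! j) j g) [0..<length P]"

definition pauli_commute :: "pstring \<Rightarrow> pstring \<Rightarrow> bool" where
  "pauli_commute P Q \<longleftrightarrow> (\<forall>f. act P (act Q f) = act Q (act P f))"

definition pauli_anticommute :: "pstring \<Rightarrow> pstring \<Rightarrow> bool" where
  "pauli_anticommute P Q \<longleftrightarrow> (\<forall>f. act P (act Q f) = - act Q (act P f))"

(* labeled patterns (A, a): a is a map A \<rightarrow> {X,Y,Z}, stored as a total function
   that equals PI outside A (canonical representative) *)
type_synonym pattern = "nat set \<times> (nat \<Rightarrow> pauli)"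
type_synonym dict = "pattern \<Rightarrow> int"

definition restr :: "pstring \<Rightarrow> nat set \<Rightarrow> (nat \<Rightarrow> pauli)" where
  "restr P A = (\<lambda>j. if j \<in> A then P ! j else PI)"

definition labels :: "pstring \<Rightarrow> nat set \<Rightarrow> (nat \<Rightarrow> pauli) set" where
  "labels P A = {a. (\<forall>j\<in>A. a j \<noteq> PI \<and> a j \<noteq> P ! j) \<and> (\<forall>j. j \<notin> A \<longrightarrow> a j = PI)}"

definition Zval :: "dict \<Rightarrow> pstring \<Rightarrow> int" where
  "Zval D P = (\<Sum>A\<in>Pow (supp P). (-2) ^ card A * (\<Sum>a\<in>labels P A. D (A, a)))"

definition dict_update :: "dict \<Rightarrow> pstring \<Rightarrow> dict" where
  "dict_update D P = (\<lambda>(A, a). D (A, a) + (if A \<subseteq> supp P \<and> a = restr P A then 1 else 0))"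

datatype result = AllCommute | Found nat nat | ScanFailed

(* Reported indices are 1-based as in the paper. ScanFailed models the (unspecified)
   case that c > 0 but the scan finds no anticommuting partner. *)
fun run :: "pstring list \<Rightarrow> pstring list \<Rightarrow> dict \<Rightarrow> int \<Rightarrow> result" where
  "run prev [] D N = AllCommute"
| "run prev (P # rest) D N =
     (let i = length prev + 1;
          c = real_of_int (N - Zval D P) / 2
      in if c > 0 then
           (case find (\<lambda>j. odd (card (conf (prev ! (j - 1)) P))) [1..<i] of
              Some j \<Rightarrow> Found j i
            | None \<Rightarrow> ScanFailed)
         else run (prev @ [P]) rest (dict_update D P) (N + 1))"

definition certify :: "pstring list \<Rightarrow> result" where
  "certify Ps = run [] Ps (\<lambda>_. 0) 0"

end

theory Submission
  imports Defs
begin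

(* On a single qubit two letters anticommute exactly when both are non-identity and
   distinct, so swapping two strings costs the sign (-1)^|conf P Q|.  If the dictionary
   holds the patterns of the strings processed so far, then, since
   sum_{A <= C} (-2)^|A| = (-1)^|C|, the quantity Z equals sum_Q (-1)^|conf P Q|, so
   c = (N - Z)/2 is exactly the number of earlier strings anticommuting with P.  Hence the
   scan is entered iff such a string exists, and then it finds one. *)

definition letters_anticommute :: "pauli \<Rightarrow> pauli \<Rightarrow> bool" where
  "letters_anticommute p q \<longleftrightarrow> p \<noteq> PI \<and> q \<noteq> PI \<and> p \<noteq> q"

definition pauli_at :: "pstring \<Rightarrow> nat \<Rightarrow> pauli" where
  "pauli_at P j = (if j < length P then P ! j else PI)"

lemma conf_sym: "conf P Q = conf Q P"
  by (auto simp: conf_def)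

lemma act1_commute:
  "j \<noteq> k \<Longrightarrow> act1 p j (act1 q k f) = act1 q k (act1 p j f)"
  by (cases p; cases q) (auto simp: fun_eq_iff fun_upd_twist)

lemma act1_same_qubit:
  "act1 p j (act1 q j f) =
     (\<lambda>x. (if letters_anticommute p q then -1 else 1) * act1 q j (act1 p j f) x)"
  by (cases p; cases q) (auto simp: fun_eq_iff letters_anticommute_def)

lemma act1_scale: "act1 p j (\<lambda>x. c * f x) = (\<lambda>x. c * act1 p j f x)"
  by (cases p) (auto simp: fun_eq_iff algebra_simps)

lemma act1_involution: "act1 p j (act1 p j f) = f"
  by (cases p) (auto simp: fun_eq_iff)

definition act_on :: "(nat \<Rightarrow> pauli) \<Rightarrow> nat list \<Rightarrow>
    ((nat \<Rightarrow> bool) \<Rightarrow> complex) \<Rightarrow> ((nat \<Rightarrow> bool) \<Rightarrow> complex)" where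
  "act_on p js = fold (\<lambda>j. act1 (p j) j) js"

lemma act_on_Nil [simp]: "act_on p [] f = f"
  by (simp add: act_on_def)

lemma act_on_Cons [simp]: "act_on p (j # js) f = act_on p js (act1 (p j) j f)"
  by (simp add: act_on_def)

lemma act1_act_on: "j \<notin> set js \<Longrightarrow> act1 q j (act_on p js f) = act_on p js (act1 q j f)"
  by (induction js arbitrary: f) (simp_all add: act1_commute)

lemma act_on_scale: "act_on p js (\<lambda>x. c * f x) = (\<lambda>x. c * act_on p js f x)"
  by (induction js arbitrary: f) (simp_all add: act1_scale)

lemma act_on_eq_zero: "act_on p js f = (\<lambda>_. 0) \<Longrightarrow> f = (\<lambda>_. 0)"
proof (induction js arbitrary: f)
  case (Cons j js)
  then have "act1 (p j) j f = (\<lambda>x. 0 * f x)" by simp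
  then have "act1 (p j) j (act1 (p j) j f) = (\<lambda>x. 0 * act1 (p j) j f x)"
    by (simp only: act1_scale)
  then show ?case by (simp add: act1_involution)
qed simp

lemma act_on_swap:
  "distinct js \<Longrightarrow> act_on p js (act_on q js f) =
     (\<lambda>x. (-1) ^ card {j \<in> set js. letters_anticommute (p j) (q j)} * act_on q js (act_on p js f) x)"
proof (induction js arbitrary: f)
  case (Cons j js)
  let ?K = "{k \<in> set js. letters_anticommute (p k) (q k)}"
  let ?s = "if letters_anticommute (p j) (q j) then -1 else 1 :: complex"
  have "act_on p (j # js) (act_on q (j # js) f) = act_on p js (act_on q js (act1 (p j) j (act1 (q j) j f)))"
    using Cons.prems by (simp add: act1_act_on)
  also have "\<dots> = (\<lambda>x. ?s * (-1) ^ card ?K * act_on q js (act_on p js (act1 (q j) j (act1 (p j) j f))) x)"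
    using Cons by (simp add: act1_same_qubit[of "p j" j "q j"] act_on_scale)
  also have "\<dots> = (\<lambda>x. ?s * (-1) ^ card ?K * act_on q (j # js) (act_on p (j # js) f) x)"
    using Cons.prems by (simp add: act1_act_on)
  also have "?s * (-1) ^ card ?K = (-1) ^ card {k \<in> set (j # js). letters_anticommute (p k) (q k)}"
  proof -
    have split: "{k \<in> set (j # js). letters_anticommute (p k) (q k)} =
        (if letters_anticommute (p j) (q j) then insert j ?K else ?K)"
      by auto
    have "j \<notin> ?K" "finite ?K"
      using Cons.prems by auto
    then show ?thesis
      unfolding split by (simp add: card_insert_if)
  qed
  finally show ?case .
qed simp

lemma act_eq_act_on_pauli_at:
  assumes "length P \<le> m"
  shows "act P = act_on (pauli_at P) [0..<m]"
proof -
  have "[0..<m] = [0..<length P] @ [length P..<m]"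
    using assms upt_add_eq_append[of 0 "length P" "m - length P"] by simp
  moreover have "act_on (pauli_at P) [length P..<m] = id"
    by (rule ext, induction m) (simp_all add: act_on_def pauli_at_def)
  moreover have "act P = act_on (pauli_at P) [0..<length P]"
    unfolding act_def act_on_def by (intro ext fold_cong) (simp_all add: pauli_at_def)
  ultimately show ?thesis
    by (simp add: act_on_def)
qed

lemma act_eq_zero: "act P f = (\<lambda>_. 0) \<Longrightarrow> f = (\<lambda>_. 0)"
  using act_on_eq_zero by (simp add: act_eq_act_on_pauli_at[of P "length P"])

lemma act_swap:
  "act P (act Q f) = (\<lambda>x. (-1) ^ card (conf P Q) * act Q (act P f) x)"
proof -
  define m where "m = max (length P) (length Q)"
  have "{j \<in> set [0..<m]. letters_anticommute (pauli_at P j) (pauli_at Q j)} = conf P Q"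
    by (auto simp: conf_def pauli_at_def letters_anticommute_def m_def)
  moreover have "act P = act_on (pauli_at P) [0..<m]" "act Q = act_on (pauli_at Q) [0..<m]"
    by (simp_all add: act_eq_act_on_pauli_at m_def)
  ultimately show ?thesis
    using act_on_swap[of "[0..<m]" "pauli_at P" "pauli_at Q" f] by simp
qed

lemma pauli_commute_iff_even_conf: "pauli_commute P Q \<longleftrightarrow> even (card (conf P Q))"
proof
  assume "even (card (conf P Q))"
  then show "pauli_commute P Q"
    by (simp add: pauli_commute_def act_swap[of P Q])
next
  assume commute: "pauli_commute P Q"
  show "even (card (conf P Q))"
  proof (rule ccontr)
    assume "odd (card (conf P Q))"
    with commute have "act Q (act P (\<lambda>_. 1)) = (\<lambda>_. 0)"
      by (auto simp: pauli_commute_def fun_eq_iff act_swap[of P Q])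
    then have "act P (\<lambda>_. 1) = (\<lambda>_. 0)"
      by (rule act_eq_zero)
    then have "(\<lambda>_::nat \<Rightarrow> bool. 1::complex) = (\<lambda>_. 0)"
      by (rule act_eq_zero)
    then show False
      by (simp add: fun_eq_iff)
  qed
qed

lemma pauli_anticommute_if_odd_conf: "odd (card (conf P Q)) \<Longrightarrow> pauli_anticommute P Q"
  by (simp add: pauli_anticommute_def act_swap[of P Q] fun_eq_iff)

instance pauli :: finite
proof
  have "(UNIV :: pauli set) = {PI, PX, PY, PZ}"
    by (auto intro: pauli.exhaust)
  then show "finite (UNIV :: pauli set)"
    by (metis finite.emptyI finite.insertI)
qed

lemma sum_Pow_power_card:
  fixes x :: "'a :: comm_semiring_1"
  assumes "finite A"
  shows "(\<Sum>X\<in>Pow A. x ^ card X) = (x + 1) ^ card A"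
  using prod_add[OF assms, of "\<lambda>_. x" "\<lambda>_. 1"] by simp

lemma finite_supp: "finite (supp P)"
  by (simp add: supp_def)

lemma finite_labels: "finite A \<Longrightarrow> finite (labels P A)"
  by (rule finite_subset[OF _ finite_set_of_finite_funs[of A UNIV PI]]) (auto simp: labels_def)

lemma restr_in_labels_iff_subset_conf:
  assumes "A \<subseteq> supp P"
  shows "A \<subseteq> supp Q \<and> restr Q A \<in> labels P A \<longleftrightarrow> A \<subseteq> conf P Q"
  using assms by (auto simp: supp_def restr_def labels_def conf_def)

definition dict_of :: "pstring list \<Rightarrow> dict" where
  "dict_of Qs = (\<lambda>(A, a). \<Sum>Q\<leftarrow>Qs. if A \<subseteq> supp Q \<and> a = restr Q A then 1 else 0)"

lemma dict_of_Nil: "dict_of [] = (\<lambda>_. 0)"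
  by (simp add: dict_of_def fun_eq_iff)

lemma dict_update_dict_of: "dict_update (dict_of Qs) P = dict_of (Qs @ [P])"
  by (simp add: fun_eq_iff dict_update_def dict_of_def)

lemma Zval_add: "Zval (\<lambda>p. D p + D' p) P = Zval D P + Zval D' P"
  by (simp add: Zval_def sum.distrib distrib_left)

lemma sum_labels_dict_of_single:
  assumes "A \<subseteq> supp P"
  shows "(\<Sum>a\<in>labels P A. dict_of [Q] (A, a)) = (if A \<subseteq> conf P Q then 1 else 0)"
proof -
  have "finite (labels P A)"
    using assms finite_labels finite_subset finite_supp by blast
  then show ?thesis
    using restr_in_labels_iff_subset_conf[OF assms, of Q]
    by (cases "A \<subseteq> supp Q") (simp_all add: dict_of_def sum.delta')
qed

lemma Zval_dict_of_single: "Zval (dict_of [Q]) P = (-1) ^ card (conf P Q)"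
proof -
  have "Zval (dict_of [Q]) P = (\<Sum>A\<in>Pow (supp P). if A \<subseteq> conf P Q then (-2) ^ card A else 0)"
    unfolding Zval_def by (intro sum.cong refl) (simp add: sum_labels_dict_of_single)
  also have "\<dots> = (\<Sum>A\<in>Pow (conf P Q). (-2) ^ card A)"
    by (rule sum.mono_neutral_cong_right) (auto simp: conf_def supp_def)
  also have "\<dots> = (-1) ^ card (conf P Q)"
    by (simp add: sum_Pow_power_card conf_def)
  finally show ?thesis .
qed

lemma Zval_dict_of: "Zval (dict_of Qs) P = (\<Sum>Q\<leftarrow>Qs. (-1) ^ card (conf P Q))"
proof (induction Qs)
  case Nil
  then show ?case by (simp add: Zval_def dict_of_def)
next
  case (Cons Q Qs)
  have "dict_of (Q # Qs) = (\<lambda>p. dict_of [Q] p + dict_of Qs p)"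
    by (simp add: dict_of_def fun_eq_iff)
  then show ?case
    using Cons by (simp add: Zval_add Zval_dict_of_single)
qed

lemma counter_minus_Zval_dict_of:
  "int (length Qs) - Zval (dict_of Qs) P = 2 * int (length (filter (\<lambda>Q. odd (card (conf P Q))) Qs))"
  by (induction Qs) (auto simp: Zval_dict_of)

definition pairwise_commuting :: "pstring list \<Rightarrow> bool" where
  "pairwise_commuting Ps \<longleftrightarrow> (\<forall>Q\<in>set Ps. \<forall>R\<in>set Ps. pauli_commute Q R)"

lemma pairwise_commuting_Nil: "pairwise_commuting []"
  by (simp add: pairwise_commuting_def)

lemma pairwise_commuting_snoc:
  "pairwise_commuting (Ps @ [P]) \<longleftrightarrow> pairwise_commuting Ps \<and> (\<forall>Q\<in>set Ps. pauli_commute Q P)"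
  by (auto simp: pairwise_commuting_def pauli_commute_def)

lemma scan_test_iff_anticommuting_predecessor:
  "0 < real_of_int (int (length prev) - Zval (dict_of prev) P) / 2 \<longleftrightarrow>
     (\<exists>Q\<in>set prev. \<not> pauli_commute Q P)"
  by (simp add: counter_minus_Zval_dict_of pauli_commute_iff_even_conf conf_sym filter_empty_conv)

lemma run_Cons_dict_of:
  "run prev (P # rest) (dict_of prev) (int (length prev)) =
    (if \<exists>Q\<in>set prev. \<not> pauli_commute Q P
     then (case find (\<lambda>j. odd (card (conf (prev ! (j - 1)) P))) [1..<length prev + 1] of
             Some j \<Rightarrow> Found j (length prev + 1)
           | None \<Rightarrow> ScanFailed)
     else run (prev @ [P]) rest (dict_of (prev @ [P])) (int (length (prev @ [P]))))"
proof -
  have "int (length (prev @ [P])) = int (length prev) + 1"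
    by simp
  then show ?thesis
    unfolding run.simps Let_def scan_test_iff_anticommuting_predecessor dict_update_dict_of
    by (simp only:)
qed

lemma run_Cons_dict_of_anticommuting:
  assumes "\<exists>Q\<in>set prev. \<not> pauli_commute Q P"
  obtains j where "1 \<le> j" "j \<le> length prev" "pauli_anticommute (prev ! (j - 1)) P"
    and "run prev (P # rest) (dict_of prev) (int (length prev)) = Found j (length prev + 1)"
proof -
  let ?test = "\<lambda>j. odd (card (conf (prev ! (j - 1)) P))"
  have run: "run prev (P # rest) (dict_of prev) (int (length prev)) =
      (case find ?test [1..<length prev + 1] of Some j \<Rightarrow> Found j (length prev + 1) | None \<Rightarrow> ScanFailed)"
    using assms by (subst run_Cons_dict_of) (simp del: upt_Suc)
  from assms obtain k where "k < length prev" "?test (Suc k)"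
    by (auto simp: in_set_conv_nth pauli_commute_iff_even_conf)
  then have "Suc k \<in> set [1..<length prev + 1]" "?test (Suc k)"
    by (simp_all del: upt_Suc)
  then have "find ?test [1..<length prev + 1] \<noteq> None"
    unfolding find_None_iff by blast
  then obtain j where "find ?test [1..<length prev + 1] = Some j"
    by blast
  then have "j \<in> set [1..<length prev + 1]" "?test j"
    by (auto simp: find_Some_iff simp del: upt_Suc)
  with run \<open>find ?test _ = Some j\<close> show ?thesis
    by (intro that) (auto simp: pauli_anticommute_if_odd_conf)
qed

lemma run_dict_of:
  assumes "pairwise_commuting prev"
  shows "(run prev rest (dict_of prev) (int (length prev)) = AllCommute \<longleftrightarrow>
            pairwise_commuting (prev @ rest)) \<and>
         (\<forall>j i. run prev rest (dict_of prev) (int (length prev)) = Found j i \<longrightarrow>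
            pauli_anticommute ((prev @ rest) ! (j - 1)) ((prev @ rest) ! (i - 1)))"
  using assms
proof (induction rest arbitrary: prev)
  case Nil
  then show ?case by simp
next
  case (Cons P rest)
  show ?case
  proof (cases "\<forall>Q\<in>set prev. pauli_commute Q P")
    case True
    then have "pairwise_commuting (prev @ [P])"
      using Cons.prems pairwise_commuting_snoc by blast
    moreover have "run prev (P # rest) (dict_of prev) (int (length prev)) =
        run (prev @ [P]) rest (dict_of (prev @ [P])) (int (length (prev @ [P])))"
      using True by (subst run_Cons_dict_of) simp
    ultimately show ?thesis
      using Cons.IH[of "prev @ [P]"] by simp
  next
    case False
    then obtain j where j: "1 \<le> j" "j \<le> length prev" "pauli_anticommute (prev ! (j - 1)) P"
      and run: "run prev (P # rest) (dict_of prev) (int (length prev)) = Found j (length prev + 1)"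
      using run_Cons_dict_of_anticommuting by blast
    have "\<not> pairwise_commuting (prev @ P # rest)"
      using False by (auto simp: pairwise_commuting_def)
    moreover have "j - 1 < length prev"
      using j by simp
    ultimately show ?thesis
      using run j by (simp add: nth_append)
  qed
qed

theorem corollary1:
  fixes Ps :: "pstring list" and n :: nat
  assumes "\<forall>P\<in>set Ps. length P = n"
  shows "(certify Ps = AllCommute \<longleftrightarrow>
            (\<forall>j<length Ps. \<forall>i<length Ps. pauli_commute (Ps ! j) (Ps ! i)))
       \<and> (\<forall>j i. certify Ps = Found j i \<longrightarrow>
            pauli_anticommute (Ps ! (j - 1)) (Ps ! (i - 1)))"
proof -
  have "certify Ps = run [] Ps (dict_of []) (int (length []))"
    by (simp add: certify_def dict_of_Nil)
  moreover have "pairwise_commuting Ps \<longleftrightarrow>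
      (\<forall>j<length Ps. \<forall>i<length Ps. pauli_commute (Ps ! j) (Ps ! i))"
    by (simp add: pairwise_commuting_def all_set_conv_all_nth)
  ultimately show ?thesis
    using run_dict_of[of "[]" Ps] by (simp add: pairwise_commuting_Nil)
qed

end
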